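(* Let $a<b$, let $g:[a,b]\to[0,\infty)$ be increasing and left-continuous, and let $f\in BV([a,b])\cap\mathcal L^1_g([a,b))$. Assume $g^C$ is $p$-$H$-Hölder on $[a,b]$, i.e. $|g^C(x)-g^C(y)|\le H|x-y|^p$ for all $x,y\in[a,b]$, with $H>0$, $p\in(0,1]$. Then $$\Big| f(a)(g^C(b)-g^C(a))+\sum_{s\in[a,b)} f(s)\Delta^+g(s)-\int_{[a,b)} f\,\mathrm d\mu_g\Big|\le H(b-a)^p\,\mathrm{Var}_a^b f$$ and $$\Big| \tfrac{f(a)+f(b)}{2}(g^C(b)-g^C(a))+\sum_{s\in[a,b)} f(s)\Delta^+g(s)-\int_{[a,b)} f\,\mathrm d\mu_g\Big|\le H\Big(\tfrac{b-a}{2}\Big)^p\mathrm{Var}_a^b f.$$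
   Context: For an increasing left-continuous $g:[a,b]\to\mathbb R$, $\mu_g$ is the Lebesgue–Stieltjes measure on $[a,b)$ with $\mu_g([c,d))=g(d)-g(c)$, and $\mathcal L^1_g([a,b))$ the space of $\mu_g$-integrable functions. $\Delta^+\varphi(t)=\varphi(t^+)-\varphi(t)$. The jump part of $g$ is $g^B(t)=\sum_{s\in[a,t)}\Delta^+g(s)$ and its continuous part is $g^C=g-g^B$. $\mathrm{Var}_a^b f$ is the total variation of $f$ on $[a,b]$. *)

theory Defs
  imports "HOL-Analysis.Analysis"
begin

definition jump_plus :: "(real \<Rightarrow> real) \<Rightarrow> real \<Rightarrow> real" where
  "jump_plus g t = Lim (at_right t) g - g t"

definition jump_part :: "real \<Rightarrow> (real \<Rightarrow> real) \<Rightarrow> real \<Rightarrow> real" where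
  "jump_part a g t = infsum (jump_plus g) {a..<t}"

definition cont_part :: "real \<Rightarrow> (real \<Rightarrow> real) \<Rightarrow> real \<Rightarrow> real" where
  "cont_part a g t = g t - jump_part a g t"

definition LS_measure :: "real \<Rightarrow> real \<Rightarrow> (real \<Rightarrow> real) \<Rightarrow> real measure" where
  "LS_measure a b g = (THE M. sets M = sets borel \<and>
      (\<forall>c d. a \<le> c \<and> c \<le> d \<and> d \<le> b \<longrightarrow> emeasure M {c..<d} = ennreal (g d - g c)) \<and>
      emeasure M (- {a..<b}) = 0)"

definition variation_sums :: "real \<Rightarrow> real \<Rightarrow> (real \<Rightarrow> real) \<Rightarrow> real set" where
  "variation_sums a b f = {(\<Sum>i<n. \<bar>f (x (Suc i)) - f (x i)\<bar>) | n x.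
      x 0 = a \<and> x n = b \<and> (\<forall>i<n. x i \<le> x (Suc i))}"

definition bounded_variation :: "real \<Rightarrow> real \<Rightarrow> (real \<Rightarrow> real) \<Rightarrow> bool" where
  "bounded_variation a b f = bdd_above (variation_sums a b f)"

definition total_variation :: "real \<Rightarrow> real \<Rightarrow> (real \<Rightarrow> real) \<Rightarrow> real" where
  "total_variation a b f = Sup (variation_sums a b f)"

end

theory Submission
  imports Defs
begin

text \<open>
  The measure \<open>\<mu>\<^sub>g\<close> consists of atoms of mass \<open>\<Delta>\<^sup>+g(s)\<close> at the points \<open>s\<close> of \<open>[a,b)\<close>
  and a diffuse part of total mass \<open>g\<^sup>C(b) - g\<^sup>C(a)\<close>. Hence, for every constant \<open>c\<close>,
  the quantity \<open>c (g\<^sup>C(b) - g\<^sup>C(a)) + \<Sum>\<^sub>s f(s) \<Delta>\<^sup>+g(s) - \<integral> f d\<mu>\<^sub>g\<close> is minus the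
  integral of \<open>f - c\<close> against the diffuse part, and so is bounded by \<open>K (g\<^sup>C(b) - g\<^sup>C(a))\<close>
  whenever \<open>|f - c| \<le> K\<close> on \<open>[a,b)\<close>. For \<open>c = f(a)\<close> one may take \<open>K = Var f\<close>, for
  \<open>c = (f(a) + f(b))/2\<close> even \<open>K = Var f / 2\<close>; the Hoelder condition gives
  \<open>g\<^sup>C(b) - g\<^sup>C(a) \<le> H (b - a)\<^sup>p\<close>, and \<open>(b - a)\<^sup>p / 2 \<le> ((b - a)/2)\<^sup>p\<close> as \<open>p \<le> 1\<close>.
  The diffuse part is never constructed: it suffices to remove finitely many atoms at a time and
  pass to the limit along finite sets of atoms.
\<close>

lemma (in finite_measure) integral_minus_atoms_bound:
  fixes h :: "'a \<Rightarrow> real"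
  assumes A: "A \<in> sets M" "AE x in M. x \<in> A"
    and F: "finite F" "F \<subseteq> A" "\<And>s. s \<in> F \<Longrightarrow> {s} \<in> sets M"
    and h: "integrable M h" "\<And>x. x \<in> A \<Longrightarrow> \<bar>h x\<bar> \<le> K"
  shows "\<bar>integral\<^sup>L M h - (\<Sum>s\<in>F. h s * measure M {s})\<bar> \<le> K * (measure M A - measure M F)"
proof -
  have F_sets: "F \<in> sets M"
    using sets.countable[OF F(3) countable_finite[OF F(1)]] .
  have D_sets: "A - F \<in> sets M"
    using A(1) F_sets by blast
  have "AE x in M. h x = h x * indicator F x + h x * indicator (A - F) x"
    using A(2) by eventually_elim (auto simp: indicator_def)
  then have "integral\<^sup>L M h = (\<integral>x. h x * indicator F x + h x * indicator (A - F) x \<partial>M)"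
    using F_sets D_sets h(1) by (intro integral_cong_AE) auto
  also have "\<dots> = (\<integral>x. h x * indicator F x \<partial>M) + (\<integral>x. h x * indicator (A - F) x \<partial>M)"
    using F_sets D_sets h(1) by (intro Bochner_Integration.integral_add integrable_real_mult_indicator)
  also have "(\<integral>x. h x * indicator F x \<partial>M) = (\<Sum>s\<in>F. h s * measure M {s})"
    using F by (intro integral_indicator_finite_real) (auto simp: less_top[symmetric])
  finally have split: "integral\<^sup>L M h - (\<Sum>s\<in>F. h s * measure M {s})
      = (\<integral>x. h x * indicator (A - F) x \<partial>M)" by simp
  have "\<bar>\<integral>x. h x * indicator (A - F) x \<partial>M\<bar> \<le> (\<integral>x. \<bar>h x * indicator (A - F) x\<bar> \<partial>M)"
    using integral_norm_bound[of M "\<lambda>x. h x * indicator (A - F) x"] by simp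
  also have "\<dots> \<le> (\<integral>x. K * indicator (A - F) x \<partial>M)"
    using h D_sets
    by (intro integral_mono integrable_abs integrable_real_mult_indicator integrable_mult_right
        integrable_real_indicator) (auto simp: indicator_def abs_mult less_top[symmetric])
  also have "\<dots> = K * (measure M A - measure M F)"
    using A(1) F(2) F_sets by (simp add: finite_measure_Diff)
  finally show ?thesis
    unfolding split .
qed

lemma bounded_mult_summable_on:
  fixes u j :: "'a \<Rightarrow> real"
  assumes j: "j summable_on A" "\<And>s. s \<in> A \<Longrightarrow> 0 \<le> j s"
    and u: "\<And>s. s \<in> A \<Longrightarrow> \<bar>u s\<bar> \<le> D"
  shows "(\<lambda>s. u s * j s) summable_on A"
proof (rule abs_summable_summable)
  have "norm (D * j s) = D * j s" if "s \<in> A" for s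
    using j(2)[OF that] u[OF that] by (simp add: abs_mult)
  then have "(\<lambda>s. norm (D * j s)) summable_on A"
    using summable_on_cmult_right[OF j(1), of D] by (simp cong: summable_on_cong)
  then show "(\<lambda>s. norm (u s * j s)) summable_on A"
    by (rule Infinite_Sum.abs_summable_on_comparison_test)
      (use j(2) u in \<open>auto simp: abs_mult intro!: mult_right_mono intro: order.trans[OF _ abs_ge_self]\<close>)
qed

lemma infsum_bound_from_finite_sums:
  fixes h j :: "'a \<Rightarrow> real"
  assumes "(\<lambda>s. h s * j s) summable_on A" "j summable_on A"
    and finite_bound: "\<And>F. finite F \<Longrightarrow> F \<subseteq> A \<Longrightarrow>
      \<bar>I - (\<Sum>s\<in>F. h s * j s)\<bar> \<le> K * (C - (\<Sum>s\<in>F. j s))"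
  shows "\<bar>I - (\<Sum>\<^sub>\<infinity>s\<in>A. h s * j s)\<bar> \<le> K * (C - (\<Sum>\<^sub>\<infinity>s\<in>A. j s))"
proof (rule tendsto_le[OF finite_subsets_at_top_neq_bot])
  show "((\<lambda>F. K * (C - sum j F)) \<longlongrightarrow> K * (C - (\<Sum>\<^sub>\<infinity>s\<in>A. j s))) (finite_subsets_at_top A)"
    using has_sum_infsum[OF assms(2)] unfolding has_sum_def by (intro tendsto_intros)
  show "((\<lambda>F. \<bar>I - (\<Sum>s\<in>F. h s * j s)\<bar>) \<longlongrightarrow> \<bar>I - (\<Sum>\<^sub>\<infinity>s\<in>A. h s * j s)\<bar>)
      (finite_subsets_at_top A)"
    using has_sum_infsum[OF assms(1)] unfolding has_sum_def by (intro tendsto_intros)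
  show "\<forall>\<^sub>F F in finite_subsets_at_top A.
      \<bar>I - (\<Sum>s\<in>F. h s * j s)\<bar> \<le> K * (C - sum j F)"
    by (rule eventually_finite_subsets_at_top_weakI) (rule finite_bound)
qed

lemma Ico_measure_exists:
  fixes G :: "real \<Rightarrow> real"
  assumes mono: "mono G" and left_cont: "\<And>x. continuous (at_left x) G"
  shows "\<exists>M. sets M = sets borel \<and>
    (\<forall>c d. c \<le> d \<longrightarrow> emeasure M {c..<d} = ennreal (G d - G c))"
proof -
  define F where "F y = - G (- y)" for y
  have F_mono: "F x \<le> F y" if "x \<le> y" for x y
    using monoD[OF mono, of "- y" "- x"] that by (simp add: F_def)
  have F_right_cont: "continuous (at_right y) F" for y
  proof -
    have "((\<lambda>y. G (- y)) \<longlongrightarrow> G (- y)) (at_right y)"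
      using left_cont[of "- y"]
      by (simp add: continuous_within filterlim_at_left_to_right o_def)
    then show ?thesis
      unfolding continuous_within F_def by (intro tendsto_minus)
  qed
  \<comment> \<open>Reflecting the line turns the Ioc-measure of the right-continuous F into an Ico-measure for G.\<close>
  define M where "M = distr (interval_measure F) borel uminus"
  have "emeasure M {c..<d} = ennreal (G d - G c)" if "c \<le> d" for c d
  proof -
    have "emeasure M {c..<d} = emeasure (interval_measure F) (uminus -` {c..<d})"
      unfolding M_def by (subst emeasure_distr) auto
    also have "uminus -` {c..<d} = {- d<..- c}" by auto
    also have "emeasure (interval_measure F) {- d<..- c} = ennreal (F (- c) - F (- d))"
      using that F_mono F_right_cont by (intro emeasure_interval_measure_Ioc) auto
    finally show ?thesis by (simp add: F_def)
  qed
  then show ?thesis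
    by (intro exI[of _ M]) (simp add: M_def)
qed

lemma clamp_left_continuous:
  fixes g :: "real \<Rightarrow> real"
  assumes "a \<le> b" and left_cont: "\<forall>t\<in>{a<..b}. (g \<longlongrightarrow> g t) (at_left t)"
  shows "continuous (at_left x) (\<lambda>x. g (max a (min b x)))"
  unfolding continuous_within
proof (cases "a < x \<and> x \<le> b")
  case True
  have "eventually (\<lambda>y. y \<in> {a<..<x}) (at_left x)"
    using True by (intro eventually_at_left_real) auto
  then have "eventually (\<lambda>y. g y = g (max a (min b y))) (at_left x)"
    by eventually_elim (use True in auto)
  then show "((\<lambda>x. g (max a (min b x))) \<longlongrightarrow> g (max a (min b x))) (at_left x)"
    using True left_cont by (auto intro: Lim_transform_eventually)
next
  case False
  have "\<exists>l<x. \<forall>y\<in>{l<..<x}. max a (min b y) = max a (min b x)"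
  proof (cases "x \<le> a")
    case True
    then show ?thesis using \<open>a \<le> b\<close> by (intro exI[of _ "x - 1"]) auto
  next
    case False
    then show ?thesis using \<open>\<not> (a < x \<and> x \<le> b)\<close> by (intro exI[of _ b]) auto
  qed
  then obtain l where "l < x" and const: "\<And>y. y \<in> {l<..<x} \<Longrightarrow> max a (min b y) = max a (min b x)"
    by blast
  have "eventually (\<lambda>y. y \<in> {l<..<x}) (at_left x)"
    using \<open>l < x\<close> by (intro eventually_at_left_real)
  then have "eventually (\<lambda>y. g (max a (min b y)) = g (max a (min b x))) (at_left x)"
    by eventually_elim (simp add: const)
  then show "((\<lambda>x. g (max a (min b x))) \<longlongrightarrow> g (max a (min b x))) (at_left x)"
    by (rule tendsto_eventually)
qed

lemma cont_part_increment:
  "cont_part a g b - cont_part a g a = g b - g a - (\<Sum>\<^sub>\<infinity>s\<in>{a..<b}. jump_plus g s)"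
  by (simp add: cont_part_def jump_part_def)

locale LS_measure_space =
  fixes a b :: real and g :: "real \<Rightarrow> real" and M :: "real measure"
  assumes a_le_b: "a \<le> b" and mono: "mono_on {a..b} g"
    and sets_eq: "sets M = sets borel"
    and emeasure_Ico:
      "\<And>c d. a \<le> c \<Longrightarrow> c \<le> d \<Longrightarrow> d \<le> b \<Longrightarrow> emeasure M {c..<d} = ennreal (g d - g c)"
    and emeasure_outside: "emeasure M (- {a..<b}) = 0"

lemma LS_measure_space_exists:
  assumes "a \<le> b" "mono_on {a..b} g" "\<forall>t\<in>{a<..b}. (g \<longlongrightarrow> g t) (at_left t)"
  shows "\<exists>M. LS_measure_space a b g M"
proof -
  define G where "G x = g (max a (min b x))" for x
  have "mono G"
    unfolding G_def using assms(1) by (intro monoI mono_onD[OF assms(2)]) auto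
  moreover have "continuous (at_left x) G" for x
    unfolding G_def using assms(1,3) by (rule clamp_left_continuous)
  ultimately obtain N where sets_N: "sets N = sets borel"
    and N_Ico: "\<And>c d. c \<le> d \<Longrightarrow> emeasure N {c..<d} = ennreal (G d - G c)"
    using Ico_measure_exists by blast
  define M where "M = density N (indicator {a..<b})"
  have M_eq: "emeasure M X = emeasure N ({a..<b} \<inter> X)" if "X \<in> sets borel" for X
    unfolding M_def using that sets_N by (intro emeasure_restricted) auto
  have "LS_measure_space a b g M"
  proof
    show "emeasure M {c..<d} = ennreal (g d - g c)" if "a \<le> c" "c \<le> d" "d \<le> b" for c d
    proof -
      have "{a..<b} \<inter> {c..<d} = {c..<d}" using that by auto
      then show ?thesis using that M_eq[of "{c..<d}"] N_Ico[of c d] by (simp add: G_def)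
    qed
  qed (use assms M_eq[of "- {a..<b}"] sets_N in \<open>auto simp: M_def\<close>)
  then show ?thesis ..
qed

context LS_measure_space
begin

lemma space_eq [simp]: "space M = UNIV"
  using sets_eq_imp_space_eq[OF sets_eq] by simp

lemma AE_in_Ico: "AE x in M. x \<in> {a..<b}"
  using emeasure_outside by (intro AE_I[of _ _ "- {a..<b}"]) (auto simp: sets_eq)

lemma emeasure_inter_Ico: "X \<in> sets borel \<Longrightarrow> emeasure M X = emeasure M (X \<inter> {a..<b})"
  using AE_in_Ico by (intro emeasure_eq_AE) (auto simp: sets_eq)

lemma emeasure_UNIV: "emeasure M UNIV = ennreal (g b - g a)"
  using emeasure_inter_Ico[of UNIV] emeasure_Ico[of a b] a_le_b by simp

sublocale finite_measure M
  by standard (simp add: emeasure_UNIV)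

lemma measure_UNIV: "measure M UNIV = g b - g a"
  using emeasure_UNIV mono_onD[OF mono, of a b] a_le_b by (simp add: measure_def)

lemma measure_Ico: "a \<le> c \<Longrightarrow> c \<le> d \<Longrightarrow> d \<le> b \<Longrightarrow> measure M {c..<d} = g d - g c"
  using emeasure_Ico mono_onD[OF mono, of c d] by (simp add: measure_def)

lemma unique:
  assumes "LS_measure_space a b g N"
  shows "M = N"
proof (rule measure_eqI_generator_eq[where E = "range (\<lambda>(c, d). {c..<d::real})" and \<Omega> = UNIV
      and A = "\<lambda>i. {- real i..<real i}"])
  show "emeasure M {- real i..<real i} \<noteq> \<infinity>" for i
    by simp
  interpret N: LS_measure_space a b g N by fact
  show "Int_stable (range (\<lambda>(c, d). {c..<d::real}))"
    by (auto simp: Int_stable_def image_iff intro!: exI[of _ "(max _ _, min _ _)"])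
  show "sets M = sigma_sets UNIV (range (\<lambda>(c, d). {c..<d}))"
    "sets N = sigma_sets UNIV (range (\<lambda>(c, d). {c..<d}))"
    using sets_eq N.sets_eq by (simp_all add: borel_eq_atLeastLessThan)
  show "(\<Union>i. {- real i..<real i}) = UNIV"
  proof (rule sym, rule UNIV_eq_I)
    fix x :: real
    obtain n :: nat where "\<bar>x\<bar> < real n"
      using reals_Archimedean2 by blast
    then have "x \<in> {- real n..<real n}" by auto
    then show "x \<in> (\<Union>i. {- real i..<real i})" by blast
  qed
  fix X assume "X \<in> range (\<lambda>(c, d). {c..<d::real})"
  then obtain c d where X: "X = {c..<d}" by auto
  have "X \<inter> {a..<b} = {max a c..<min b d}" by (auto simp: X)
  then show "emeasure M X = emeasure N X"
    using emeasure_inter_Ico[of X] N.emeasure_inter_Ico[of X]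
      emeasure_Ico[of "max a c" "min b d"] N.emeasure_Ico[of "max a c" "min b d"]
    by (cases "max a c \<le> min b d") (simp_all add: X)
qed auto

lemma measure_singleton_eq_jump_plus:
  assumes "a \<le> s" "s < b"
  shows "measure M {s} = jump_plus g s"
proof -
  have "(g \<longlongrightarrow> g s + measure M {s}) (at_right s)"
  proof (rule tendsto_at_right_sequentially[OF \<open>s < b\<close>])
    fix S :: "nat \<Rightarrow> real"
    assume S: "\<And>n. s < S n" "\<And>n. S n < b" "decseq S" "S \<longlonglongrightarrow> s"
    have "(\<lambda>n. measure M {s..<S n}) \<longlonglongrightarrow> measure M (\<Inter>n. {s..<S n})"
      using S(3) by (intro finite_Lim_measure_decseq)
        (auto simp: sets_eq decseq_def intro: order.strict_trans2)
    also have "(\<Inter>n. {s..<S n}) = {s}"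
    proof (intro antisym subsetI)
      fix x assume x: "x \<in> (\<Inter>n. {s..<S n})"
      then have "x \<le> s"
        by (intro LIMSEQ_le_const[OF S(4)]) (auto intro: less_imp_le)
      with x show "x \<in> {s}" by auto
    qed (use S(1) in auto)
    finally have "(\<lambda>n. measure M {s..<S n}) \<longlonglongrightarrow> measure M {s}" .
    then have "(\<lambda>n. g s + measure M {s..<S n}) \<longlonglongrightarrow> g s + measure M {s}"
      by (intro tendsto_add tendsto_const)
    moreover have "g (S n) = g s + measure M {s..<S n}" for n
      using measure_Ico[of s "S n"] S(1,2)[of n] assms by simp
    ultimately show "(\<lambda>n. g (S n)) \<longlonglongrightarrow> g s + measure M {s}"
      by simp
  qed
  then have "Lim (at_right s) g = g s + measure M {s}"
    by (rule tendsto_Lim[OF trivial_limit_at_right_real])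
  then show ?thesis
    unfolding jump_plus_def by simp
qed

lemma jump_plus_nonneg: "s \<in> {a..<b} \<Longrightarrow> 0 \<le> jump_plus g s"
  using measure_singleton_eq_jump_plus[of s] measure_nonneg[of M "{s}"] by auto

lemma measure_finite_eq_sum_jump_plus:
  assumes "finite F" "F \<subseteq> {a..<b}"
  shows "measure M F = (\<Sum>s\<in>F. jump_plus g s)"
  using assms measure_singleton_eq_jump_plus
  by (subst measure_eq_sum_singleton) (auto simp: sets_eq intro!: sum.cong)

lemma jump_plus_summable_on: "jump_plus g summable_on {a..<b}"
proof (rule nonneg_bdd_above_summable_on)
  show "bdd_above (sum (jump_plus g) ` {F. F \<subseteq> {a..<b} \<and> finite F})"
  proof (rule bdd_aboveI2)
    fix F assume "F \<in> {F. F \<subseteq> {a..<b} \<and> finite F}"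
    then show "sum (jump_plus g) F \<le> measure M UNIV"
      using measure_finite_eq_sum_jump_plus[of F] bounded_measure[of F] by auto
  qed
qed (rule jump_plus_nonneg)

lemma integral_minus_jump_sum_bound:
  assumes h: "integrable M h" "\<And>x. x \<in> {a..<b} \<Longrightarrow> \<bar>h x\<bar> \<le> K"
  shows "\<bar>integral\<^sup>L M h - (\<Sum>\<^sub>\<infinity>s\<in>{a..<b}. h s * jump_plus g s)\<bar>
    \<le> K * (cont_part a g b - cont_part a g a)"
proof -
  have "\<bar>integral\<^sup>L M h - (\<Sum>\<^sub>\<infinity>s\<in>{a..<b}. h s * jump_plus g s)\<bar>
      \<le> K * (g b - g a - (\<Sum>\<^sub>\<infinity>s\<in>{a..<b}. jump_plus g s))"
  proof (rule infsum_bound_from_finite_sums)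
    show "(\<lambda>s. h s * jump_plus g s) summable_on {a..<b}"
      using jump_plus_summable_on jump_plus_nonneg h(2) by (rule bounded_mult_summable_on)
    fix F assume F: "finite F" "F \<subseteq> {a..<b}"
    have "(\<Sum>s\<in>F. h s * measure M {s}) = (\<Sum>s\<in>F. h s * jump_plus g s)"
      using F(2) measure_singleton_eq_jump_plus by (auto intro!: sum.cong)
    moreover have "measure M {a..<b} - measure M F = g b - g a - (\<Sum>s\<in>F. jump_plus g s)"
      using F measure_finite_eq_sum_jump_plus measure_Ico[of a b] a_le_b by simp
    ultimately show "\<bar>integral\<^sup>L M h - (\<Sum>s\<in>F. h s * jump_plus g s)\<bar>
        \<le> K * (g b - g a - (\<Sum>s\<in>F. jump_plus g s))"
      using integral_minus_atoms_bound[of "{a..<b}" F h K] AE_in_Ico F h by (simp add: sets_eq)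
  qed (rule jump_plus_summable_on)
  then show ?thesis
    by (simp add: cont_part_increment)
qed

lemma integral_approximation_error_le:
  assumes f: "integrable M f" "\<And>t. t \<in> {a..<b} \<Longrightarrow> \<bar>f t - c\<bar> \<le> K"
  shows "\<bar>c * (cont_part a g b - cont_part a g a) + (\<Sum>\<^sub>\<infinity>s\<in>{a..<b}. f s * jump_plus g s)
      - integral\<^sup>L M f\<bar> \<le> K * (cont_part a g b - cont_part a g a)"
proof -
  have "(\<lambda>s. (f s - c) * jump_plus g s) summable_on {a..<b}"
    using jump_plus_summable_on jump_plus_nonneg f(2) by (rule bounded_mult_summable_on)
  then have "(\<Sum>\<^sub>\<infinity>s\<in>{a..<b}. f s * jump_plus g s)
      = (\<Sum>\<^sub>\<infinity>s\<in>{a..<b}. (f s - c) * jump_plus g s) + (\<Sum>\<^sub>\<infinity>s\<in>{a..<b}. c * jump_plus g s)"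
    using jump_plus_summable_on
    by (subst infsum_add[symmetric]) (auto simp: algebra_simps intro: summable_on_cmult_right)
  also have "(\<Sum>\<^sub>\<infinity>s\<in>{a..<b}. c * jump_plus g s) = c * (\<Sum>\<^sub>\<infinity>s\<in>{a..<b}. jump_plus g s)"
    by (rule infsum_cmult_right')
  finally have "(\<Sum>\<^sub>\<infinity>s\<in>{a..<b}. f s * jump_plus g s)
      = (\<Sum>\<^sub>\<infinity>s\<in>{a..<b}. (f s - c) * jump_plus g s) + c * (\<Sum>\<^sub>\<infinity>s\<in>{a..<b}. jump_plus g s)" .
  moreover have "integral\<^sup>L M f = (\<integral>x. f x - c \<partial>M) + c * (g b - g a)"
    using f(1) measure_UNIV by simp
  moreover have "\<bar>(\<integral>x. f x - c \<partial>M) - (\<Sum>\<^sub>\<infinity>s\<in>{a..<b}. (f s - c) * jump_plus g s)\<bar>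
      \<le> K * (cont_part a g b - cont_part a g a)"
    using f by (intro integral_minus_jump_sum_bound) auto
  ultimately show ?thesis
    by (simp add: cont_part_increment abs_minus_commute algebra_simps)
qed

end

lemma LS_measure_space_LS_measure:
  assumes "a \<le> b" "mono_on {a..b} g" "\<forall>t\<in>{a<..b}. (g \<longlongrightarrow> g t) (at_left t)"
  shows "LS_measure_space a b g (LS_measure a b g)"
proof -
  have "\<exists>!M. LS_measure_space a b g M"
    using LS_measure_space_exists[OF assms] LS_measure_space.unique by blast
  moreover have "LS_measure a b g = (THE M. LS_measure_space a b g M)"
    using assms(1,2) unfolding LS_measure_def LS_measure_space_def by (intro arg_cong[where f = The] ext) blast
  ultimately show ?thesis
    by (simp add: theI')
qed

lemma two_step_variation_le_total_variation:
  assumes "bounded_variation a b f" "a \<le> t" "t \<le> b"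
  shows "\<bar>f t - f a\<bar> + \<bar>f b - f t\<bar> \<le> total_variation a b f"
proof -
  define x where "x i = (if i = 0 then a else if i = 1 then t else b)" for i :: nat
  have "(\<Sum>i<2. \<bar>f (x (Suc i)) - f (x i)\<bar>) \<in> variation_sums a b f"
    unfolding variation_sums_def using assms(2,3)
    by (intro CollectI exI[of _ 2] exI[of _ x]) (auto simp: x_def less_2_cases_iff)
  then have "(\<Sum>i<2. \<bar>f (x (Suc i)) - f (x i)\<bar>) \<le> total_variation a b f"
    using assms(1) unfolding total_variation_def bounded_variation_def by (rule cSup_upper)
  then show ?thesis
    by (simp add: x_def numeral_2_eq_2)
qed

lemma abs_sub_midpoint_le_half_total_variation:
  assumes "bounded_variation a b f" "a \<le> t" "t \<le> b"
  shows "\<bar>f t - (f a + f b) / 2\<bar> \<le> total_variation a b f / 2"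
proof -
  have "\<bar>f t - (f a + f b) / 2\<bar> = \<bar>(f t - f a) - (f b - f t)\<bar> / 2"
    by (simp add: abs_divide[symmetric] field_simps)
  also have "\<dots> \<le> (\<bar>f t - f a\<bar> + \<bar>f b - f t\<bar>) / 2"
    by (intro divide_right_mono abs_triangle_ineq4) simp
  finally have "\<bar>f t - (f a + f b) / 2\<bar> \<le> (\<bar>f t - f a\<bar> + \<bar>f b - f t\<bar>) / 2" .
  then show ?thesis
    using two_step_variation_le_total_variation[OF assms] by simp
qed

lemma powr_half_le:
  fixes x p :: real
  assumes "0 \<le> x" "p \<le> 1"
  shows "x powr p / 2 \<le> (x / 2) powr p"
proof -
  have "2 powr p \<le> 2"
    using powr_mono[OF assms(2), of 2] by simp
  then have "x powr p / 2 \<le> x powr p / 2 powr p"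
    by (intro divide_left_mono) auto
  also have "\<dots> = (x / 2) powr p"
    using assms(1) by (simp add: powr_divide)
  finally show ?thesis .
qed

theorem mainTheorem2:
  fixes a b H p :: real and g f :: "real \<Rightarrow> real"
  assumes "a < b"
    and "mono_on {a..b} g"
    and "\<forall>x\<in>{a..b}. 0 \<le> g x"
    and "\<forall>t\<in>{a<..b}. (g \<longlongrightarrow> g t) (at_left t)"
    and "bounded_variation a b f"
    and "integrable (LS_measure a b g) f"
    and "H > 0" and "0 < p" and "p \<le> 1"
    and "\<forall>x\<in>{a..b}. \<forall>y\<in>{a..b}.
           \<bar>cont_part a g x - cont_part a g y\<bar> \<le> H * \<bar>x - y\<bar> powr p"
  shows "(\<bar>f a * (cont_part a g b - cont_part a g a)
            + infsum (\<lambda>s. f s * jump_plus g s) {a..<b}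
            - integral\<^sup>L (LS_measure a b g) f\<bar>
           \<le> H * (b - a) powr p * total_variation a b f)
       \<and> (\<bar>(f a + f b) / 2 * (cont_part a g b - cont_part a g a)
            + infsum (\<lambda>s. f s * jump_plus g s) {a..<b}
            - integral\<^sup>L (LS_measure a b g) f\<bar>
           \<le> H * ((b - a) / 2) powr p * total_variation a b f)"
proof -
  interpret LS_measure_space a b g "LS_measure a b g"
    using assms(1,2,4) by (intro LS_measure_space_LS_measure) auto
  define V where "V = total_variation a b f"
  define C where "C = cont_part a g b - cont_part a g a"
  have "0 \<le> V"
    using two_step_variation_le_total_variation[OF assms(5), of a] assms(1) by (simp add: V_def)
  have C_le: "C \<le> H * (b - a) powr p"
    using assms(1) assms(10)[rule_format, of b a] by (simp add: C_def)
  have "\<bar>f a * C + infsum (\<lambda>s. f s * jump_plus g s) {a..<b}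
      - integral\<^sup>L (LS_measure a b g) f\<bar> \<le> V * C"
    unfolding C_def V_def using assms(5,6) two_step_variation_le_total_variation
    by (intro integral_approximation_error_le) force+
  also have "\<dots> \<le> H * (b - a) powr p * V"
    using mult_left_mono[OF C_le \<open>0 \<le> V\<close>] by (simp only: mult.commute)
  finally have left_endpoint: "\<bar>f a * C + infsum (\<lambda>s. f s * jump_plus g s) {a..<b}
      - integral\<^sup>L (LS_measure a b g) f\<bar> \<le> H * (b - a) powr p * V" .
  have "\<bar>(f a + f b) / 2 * C + infsum (\<lambda>s. f s * jump_plus g s) {a..<b}
      - integral\<^sup>L (LS_measure a b g) f\<bar> \<le> V / 2 * C"
    unfolding C_def V_def using assms(5,6) abs_sub_midpoint_le_half_total_variation
    by (intro integral_approximation_error_le) auto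
  also have "\<dots> \<le> H * ((b - a) powr p / 2) * V"
    using mult_left_mono[OF C_le, of "V / 2"] \<open>0 \<le> V\<close> by (simp add: ac_simps)
  also have "\<dots> \<le> H * ((b - a) / 2) powr p * V"
    using powr_half_le[of "b - a" p] assms(1,7,9) \<open>0 \<le> V\<close>
    by (intro mult_right_mono mult_left_mono) auto
  finally show ?thesis
    using left_endpoint unfolding C_def V_def by blast
qed

end
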